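(* Let $\mathcal{B}$ be a $\sigma$-algebra on a nonempty set $E$, let $\nu$ be an optimal measure on $\mathcal{B}$, and let $(H_n)_{n\in N}$ be an at most countable collection of pairwise disjoint $\nu$-atoms $H_n\in\mathcal{B}$ such that for every $B\in\mathcal{B}$ the supremum $\sup_{n\in N}\nu(B\cap H_n)$ is attained and equals $\nu(B)$. Then $|\nu|=\sum_{n\in N}\nu(H_n)$. In particular, $\nu$ is of bounded variation if and only if $\sum_{n\in N}\nu(H_n)<\infty$.
   Context: An optimal measure is a map $\nu:\mathcal{B}\to[0,\infty]$ with $\nu(\emptyset)=0$, $\nu(B\cup B')=\max(\nu(B),\nu(B'))$, continuous from below ($\nu(\bigcup_nB_n)=\lim_n\nu(B_n)$ for nondecreasing sequences) and from above ($\nu(\bigcap_nB_n)=\lim_n\nu(B_n)$ for nonincreasing sequences). A $\nu$-atom is $H\in\mathcal{B}$ with $\nu(H)>0$ such that for each $B\in\mathcal{B}$ either $\nu(H\setminus B)=0$ or $\nu(H\cap B)=0$. (For every optimal measure such a collection $(H_n)$ exists.) $|\nu|=\sup_\pi\sum_{B\in\pi}\nu(B)$, the supremum over finite partitions $\pi$ of $E$ into elements of $\mathcal{B}$; $\nu$ is of bounded variation if $|\nu|<\infty$. *)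

theory Defs
  imports "HOL-Analysis.Analysis"
begin

definition optimal_measure :: "'a set set \<Rightarrow> ('a set \<Rightarrow> ennreal) \<Rightarrow> bool" where
  "optimal_measure Bs \<nu> \<longleftrightarrow>
     \<nu> {} = 0 \<and>
     (\<forall>B\<in>Bs. \<forall>B'\<in>Bs. \<nu> (B \<union> B') = max (\<nu> B) (\<nu> B')) \<and>
     (\<forall>A. range A \<subseteq> Bs \<longrightarrow> incseq A \<longrightarrow> (\<lambda>n. \<nu> (A n)) \<longlonglongrightarrow> \<nu> (\<Union>n. A n)) \<and>
     (\<forall>A. range A \<subseteq> Bs \<longrightarrow> decseq A \<longrightarrow> (\<lambda>n. \<nu> (A n)) \<longlonglongrightarrow> \<nu> (\<Inter>n. A n))"

definition nu_atom :: "'a set set \<Rightarrow> ('a set \<Rightarrow> ennreal) \<Rightarrow> 'a set \<Rightarrow> bool" where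
  "nu_atom Bs \<nu> H \<longleftrightarrow> H \<in> Bs \<and> \<nu> H > 0 \<and>
     (\<forall>B\<in>Bs. \<nu> (H - B) = 0 \<or> \<nu> (H \<inter> B) = 0)"

definition variation :: "'a set \<Rightarrow> 'a set set \<Rightarrow> ('a set \<Rightarrow> ennreal) \<Rightarrow> ennreal" where
  "variation E Bs \<nu> =
     (SUP \<pi> \<in> {\<pi>. finite \<pi> \<and> \<pi> \<subseteq> Bs \<and> disjoint \<pi> \<and> \<Union>\<pi> = E}. \<Sum>B\<in>\<pi>. \<nu> B)"

definition bounded_variation :: "'a set \<Rightarrow> 'a set set \<Rightarrow> ('a set \<Rightarrow> ennreal) \<Rightarrow> bool" where
  "bounded_variation E Bs \<nu> \<longleftrightarrow> variation E Bs \<nu> < \<infinity>"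

end

theory Submission
  imports Defs
begin

text \<open>Every set of positive mass carries the whole mass \<open>\<nu> B = \<nu> (H n)\<close> of some atom \<open>H n\<close>,
  with \<open>\<nu> (H n - B) = 0\<close>. Disjoint sets cannot share an atom in this way, so the positive
  blocks of a finite partition are matched injectively with atoms of equal mass, giving
  \<open>|\<nu>| \<le> \<Sum>n. \<nu> (H n)\<close>. Conversely, finitely many atoms together with the complement of
  their union form a partition, giving the reverse inequality.\<close>

lemma optimal_measure_empty: "optimal_measure M \<nu> \<Longrightarrow> \<nu> {} = 0"
  unfolding optimal_measure_def by blast

lemma optimal_measure_Un:
  "optimal_measure M \<nu> \<Longrightarrow> A \<in> M \<Longrightarrow> B \<in> M \<Longrightarrow> \<nu> (A \<union> B) = max (\<nu> A) (\<nu> B)"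
  unfolding optimal_measure_def by blast

context ring_of_sets
begin

lemma optimal_measure_split:
  assumes "optimal_measure M \<nu>" "A \<in> M" "B \<in> M"
  shows "\<nu> A = max (\<nu> (A \<inter> B)) (\<nu> (A - B))"
proof -
  have "\<nu> A = \<nu> ((A \<inter> B) \<union> (A - B))" by (simp add: Int_Diff_Un)
  then show ?thesis
    using optimal_measure_Un[OF assms(1)] assms(2,3) by (simp add: Int Diff)
qed

lemma optimal_measure_mono:
  assumes "optimal_measure M \<nu>" "A \<in> M" "B \<in> M" "A \<subseteq> B"
  shows "\<nu> A \<le> \<nu> B"
  using optimal_measure_split[OF assms(1,3,2)] assms(4) by (simp add: Int_absorb1)

lemma nu_atom_concentrated:
  assumes "optimal_measure M \<nu>" "nu_atom M \<nu> H" "B \<in> M" "\<nu> (H \<inter> B) > 0"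
  shows "\<nu> (H - B) = 0 \<and> \<nu> H = \<nu> (H \<inter> B)"
proof -
  have "H \<in> M" "\<nu> (H - B) = 0"
    using assms(2-4) unfolding nu_atom_def by auto
  then show ?thesis
    using optimal_measure_split[OF assms(1) _ assms(3), of H] by simp
qed

text \<open>Since \<open>H \<inter> B' \<subseteq> H - B\<close> is null, the whole mass of \<open>H\<close> lies outside \<open>B'\<close>.\<close>
lemma optimal_measure_diff_disjoint:
  assumes "optimal_measure M \<nu>" "H \<in> M" "B \<in> M" "B' \<in> M" "B \<inter> B' = {}" "\<nu> (H - B) = 0"
  shows "\<nu> (H - B') = \<nu> H"
proof -
  have "\<nu> (H \<inter> B') \<le> \<nu> (H - B)"
    using assms(2-5) by (intro optimal_measure_mono[OF assms(1)]) auto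
  then show ?thesis
    using optimal_measure_split[OF assms(1,2,4)] assms(6) by simp
qed

lemma sum_le_atom_sum:
  assumes \<nu>: "optimal_measure M \<nu>"
    and atoms: "\<forall>n\<in>N. nu_atom M \<nu> (H n)"
    and carried: "\<forall>B\<in>M. \<exists>n\<in>N. \<nu> (B \<inter> H n) = \<nu> B"
    and C: "finite C" "C \<subseteq> M" "disjoint C"
  shows "(\<Sum>B\<in>C. \<nu> B) \<le> (\<Sum>\<^sub>\<infinity>n\<in>N. \<nu> (H n))"
proof -
  define P where "P = {B\<in>C. \<nu> B > 0}"
  have "\<exists>n\<in>N. \<nu> (H n - B) = 0 \<and> \<nu> (H n) = \<nu> B" if "B \<in> P" for B
  proof -
    have B: "B \<in> M" "\<nu> B > 0" using that C(2) unfolding P_def by auto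
    then obtain n where "n \<in> N" "\<nu> (H n \<inter> B) = \<nu> B"
      using carried by (metis Int_commute)
    then show ?thesis
      using nu_atom_concentrated[OF \<nu> _ B(1), of "H n"] atoms B(2) by auto
  qed
  then obtain g where g: "\<And>B. B \<in> P \<Longrightarrow> g B \<in> N \<and> \<nu> (H (g B) - B) = 0 \<and> \<nu> (H (g B)) = \<nu> B"
    by metis
  have "inj_on g P"
  proof (rule inj_onI, rule ccontr)
    fix B B' assume BB': "B \<in> P" "B' \<in> P" "g B = g B'" "B \<noteq> B'"
    then have "B \<in> M" "B' \<in> M" "B \<inter> B' = {}"
      using C(2,3) unfolding P_def disjoint_def by auto
    moreover have "nu_atom M \<nu> (H (g B))" using atoms g BB'(1) by blast
    ultimately have "\<nu> (H (g B) - B') = \<nu> (H (g B))"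
      using g[OF BB'(1)] by (intro optimal_measure_diff_disjoint[OF \<nu>]) (auto simp: nu_atom_def)
    then show False
      using g[OF BB'(2)] BB'(3) \<open>nu_atom M \<nu> (H (g B))\<close> by (simp add: nu_atom_def)
  qed
  have "(\<Sum>B\<in>C. \<nu> B) = (\<Sum>B\<in>P. \<nu> B)"
    unfolding P_def using C(1) by (intro sum.mono_neutral_right) (auto simp: not_gr_zero)
  also have "\<dots> = (\<Sum>B\<in>P. \<nu> (H (g B)))" using g by simp
  also have "\<dots> = (\<Sum>n\<in>g ` P. \<nu> (H n))" using sum.reindex[OF \<open>inj_on g P\<close>, of "\<lambda>n. \<nu> (H n)"] by simp
  also have "\<dots> \<le> (SUP F\<in>{F. finite F \<and> F \<subseteq> N}. \<Sum>n\<in>F. \<nu> (H n))"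
    using g C(1) unfolding P_def by (intro SUP_upper) auto
  also have "\<dots> = (\<Sum>\<^sub>\<infinity>n\<in>N. \<nu> (H n))"
    by (rule nonneg_infsum_complete[symmetric]) simp
  finally show ?thesis .
qed

lemma variation_le_atom_sum:
  assumes "optimal_measure M \<nu>"
    and "\<forall>n\<in>N. nu_atom M \<nu> (H n)"
    and "\<forall>B\<in>M. \<exists>n\<in>N. \<nu> (B \<inter> H n) = \<nu> B"
  shows "variation \<Omega> M \<nu> \<le> (\<Sum>\<^sub>\<infinity>n\<in>N. \<nu> (H n))"
  unfolding variation_def using sum_le_atom_sum[OF assms] by (intro SUP_least) auto

end

context algebra
begin

text \<open>The complement of \<open>\<Union>C\<close> completes \<open>C\<close> to a partition of \<open>\<Omega>\<close>.\<close>
lemma sum_le_variation: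
  assumes C: "finite C" "C \<subseteq> M" "disjoint C"
  shows "(\<Sum>B\<in>C. \<nu> B) \<le> variation \<Omega> M \<nu>"
proof -
  define \<pi> where "\<pi> = insert (\<Omega> - \<Union>C) C"
  have "\<Union>C \<in> M" using C by (intro finite_Union) auto
  then have "\<pi> \<subseteq> M" "\<Union>\<pi> = \<Omega>"
    using C(2) sets_into_space unfolding \<pi>_def by auto
  moreover have "disjoint \<pi>"
    using disjoint_union[of "{\<Omega> - \<Union>C}" C] C(3) unfolding \<pi>_def by auto
  ultimately have "(\<Sum>B\<in>\<pi>. \<nu> B) \<le> variation \<Omega> M \<nu>"
    unfolding variation_def using C(1) by (intro SUP_upper) (auto simp: \<pi>_def)
  moreover have "(\<Sum>B\<in>C. \<nu> B) \<le> (\<Sum>B\<in>\<pi>. \<nu> B)"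
    unfolding \<pi>_def using C(1) by (intro sum_mono2) auto
  ultimately show ?thesis by (rule order_trans[rotated])
qed

lemma atom_sum_le_variation:
  assumes \<nu>: "optimal_measure M \<nu>"
    and disj: "disjoint_family_on H N"
    and atoms: "\<forall>n\<in>N. nu_atom M \<nu> (H n)"
  shows "(\<Sum>\<^sub>\<infinity>n\<in>N. \<nu> (H n)) \<le> variation \<Omega> M \<nu>"
proof (rule infsum_le_finite_sums)
  show "(\<lambda>n. \<nu> (H n)) summable_on N" by (rule nonneg_summable_on_complete) simp
next
  fix F assume F: "finite F" "F \<subseteq> N"
  have "H n \<noteq> {}" if "n \<in> F" for n
    using atoms F(2) that optimal_measure_empty[OF \<nu>] unfolding nu_atom_def by fastforce
  then have "disjoint (H ` F)" "inj_on H F"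
    using disjoint_family_on_iff_disjoint_image disjoint_family_on_mono[OF F(2) disj] by blast+
  moreover have "H ` F \<subseteq> M" using atoms F(2) unfolding nu_atom_def by auto
  ultimately have "(\<Sum>B\<in>H ` F. \<nu> B) \<le> variation \<Omega> M \<nu>"
    using F(1) by (intro sum_le_variation) auto
  then show "(\<Sum>n\<in>F. \<nu> (H n)) \<le> variation \<Omega> M \<nu>"
    using sum.reindex[OF \<open>inj_on H F\<close>, of \<nu>] by simp
qed

end

theorem proposition6p7:
  fixes E :: "'a set" and Bs :: "'a set set" and \<nu> :: "'a set \<Rightarrow> ennreal"
    and N :: "'i set" and H :: "'i \<Rightarrow> 'a set"
  assumes "E \<noteq> {}"
    and "sigma_algebra E Bs"
    and "optimal_measure Bs \<nu>"
    and "countable N"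
    and "disjoint_family_on H N"
    and "\<forall>n\<in>N. nu_atom Bs \<nu> (H n)"
    and "\<forall>B\<in>Bs. (\<exists>n\<in>N. \<nu> (B \<inter> H n) = (SUP m\<in>N. \<nu> (B \<inter> H m)))
                 \<and> (SUP m\<in>N. \<nu> (B \<inter> H m)) = \<nu> B"
  shows "variation E Bs \<nu> = (\<Sum>\<^sub>\<infinity>n\<in>N. \<nu> (H n))
     \<and> (bounded_variation E Bs \<nu> \<longleftrightarrow> (\<Sum>\<^sub>\<infinity>n\<in>N. \<nu> (H n)) < \<infinity>)"
proof -
  interpret sigma_algebra E Bs by fact
  have "\<forall>B\<in>Bs. \<exists>n\<in>N. \<nu> (B \<inter> H n) = \<nu> B"
    using assms(7) by metis
  then have "variation E Bs \<nu> = (\<Sum>\<^sub>\<infinity>n\<in>N. \<nu> (H n))"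
    using variation_le_atom_sum atom_sum_le_variation assms(3,5,6) by (blast intro: antisym)
  then show ?thesis unfolding bounded_variation_def by simp
qed

end
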